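(* Let $K$ be any infinite field of characteristic $0$ (e.g. $\mathbb{R}$, $\mathbb{Q}$, the real algebraic numbers). Then the statements of Theorems 4.1 and 5.1 remain true with $\mathbb{C}$ replaced by $K$ throughout: for $\varphi(x)$, $x\in K^n$, in disjunctive normal form $\bigvee_{i=1}^{d}(\bigwedge_{j} t_{ij}=0\wedge\bigwedge_{k} u_{ik}\neq0)$ with $t_{ij},u_{ik}\in K[x]$ there is $p\in K[a,b,x]$ with $\varphi(x)\iff(\exists a\in K)(\forall b\in K)\,p(a,b,x)=0$ for all $x\in K^n$; and for $\varphi(x)$ in conjunctive normal form $\bigwedge_{i=1}^{d}(\bigvee_{j} t_{ij}=0\vee\bigvee_{k} u_{ik}\neq0)$ there is $q\in K[a,b,x]$ with $\varphi(x)\iff(\forall a\in K)(\exists b\in K)\,q(a,b,x)=0$ for all $x\in K^n$ (with the same explicit polynomials and degree bounds as over $\mathbb{C}$).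
   Context: Explicit polynomials: $p=\prod_{i}\big[(1-a\prod_k u_{ik})+\sum_j t_{ij}b^j\big]$ and $q=\big[1-b\prod_{i=1}^d(a-i)\big]\big[\sum_{i=1}^d\prod_{h\neq i}(a-h)\prod_j t_{ij}\prod_k(1-b\,u_{ik})\big]$; degree bounds: $p$ has degree at most $d$ in $a$ and at most the total number of equations in $b$; $q$ has degree at most $2d-1$ in $a$ and at most $f+1$ in $b$, $f$ the maximal number of inequations in a conjunct. *)

theory Defs
  imports Main
begin

datatype var = VA | VB | VX nat

text \<open>Polynomial expressions with coefficients in K; a polynomial in K[vars]
  is a function given by such an expression.\<close>
datatype 'a pexpr =
    PConst 'a
  | PVar var
  | PAdd "'a pexpr" "'a pexpr"
  | PMul "'a pexpr" "'a pexpr"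
  | PNeg "'a pexpr"
  | PPow "'a pexpr" nat

primrec peval :: "(var \<Rightarrow> 'a::comm_ring_1) \<Rightarrow> 'a pexpr \<Rightarrow> 'a" where
  "peval \<rho> (PConst c) = c"
| "peval \<rho> (PVar v) = \<rho> v"
| "peval \<rho> (PAdd p q) = peval \<rho> p + peval \<rho> q"
| "peval \<rho> (PMul p q) = peval \<rho> p * peval \<rho> q"
| "peval \<rho> (PNeg p) = - peval \<rho> p"
| "peval \<rho> (PPow p k) = peval \<rho> p ^ k"

primrec pvars :: "'a pexpr \<Rightarrow> var set" where
  "pvars (PConst c) = {}"
| "pvars (PVar v) = {v}"
| "pvars (PAdd p q) = pvars p \<union> pvars q"
| "pvars (PMul p q) = pvars p \<union> pvars q"
| "pvars (PNeg p) = pvars p"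
| "pvars (PPow p k) = pvars p"

text \<open>Syntactic degree in a variable (an upper bound for the degree of the
  polynomial represented).\<close>
primrec pdeg :: "var \<Rightarrow> 'a pexpr \<Rightarrow> nat" where
  "pdeg v (PConst c) = 0"
| "pdeg v (PVar w) = (if w = v then 1 else 0)"
| "pdeg v (PAdd p q) = max (pdeg v p) (pdeg v q)"
| "pdeg v (PMul p q) = pdeg v p + pdeg v q"
| "pdeg v (PNeg p) = pdeg v p"
| "pdeg v (PPow p k) = k * pdeg v p"

definition env :: "'a \<Rightarrow> 'a \<Rightarrow> (nat \<Rightarrow> 'a) \<Rightarrow> var \<Rightarrow> 'a" where
  "env a b x v = (case v of VA \<Rightarrow> a | VB \<Rightarrow> b | VX k \<Rightarrow> x k)"

definition in_Kx :: "nat \<Rightarrow> 'a pexpr \<Rightarrow> bool" where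
  "in_Kx n p \<longleftrightarrow> pvars p \<subseteq> VX ` {..<n}"

definition in_Kabx :: "nat \<Rightarrow> 'a pexpr \<Rightarrow> bool" where
  "in_Kabx n p \<longleftrightarrow> pvars p \<subseteq> {VA, VB} \<union> VX ` {..<n}"

text \<open>A formula in normal form: a list of d clauses, clause i given by
  (equations t_ij, inequations u_ik).\<close>
type_synonym 'a nf = "('a pexpr list \<times> 'a pexpr list) list"

definition clause_conj :: "(nat \<Rightarrow> 'a::comm_ring_1) \<Rightarrow> 'a pexpr list \<times> 'a pexpr list \<Rightarrow> bool" where
  "clause_conj x c \<longleftrightarrow> (\<forall>t\<in>set (fst c). peval (env 0 0 x) t = 0) \<and> (\<forall>u\<in>set (snd c). peval (env 0 0 x) u \<noteq> 0)"

definition clause_disj :: "(nat \<Rightarrow> 'a::comm_ring_1) \<Rightarrow> 'a pexpr list \<times> 'a pexpr list \<Rightarrow> bool" where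
  "clause_disj x c \<longleftrightarrow> (\<exists>t\<in>set (fst c). peval (env 0 0 x) t = 0) \<or> (\<exists>u\<in>set (snd c). peval (env 0 0 x) u \<noteq> 0)"

definition holds_DNF :: "'a::comm_ring_1 nf \<Rightarrow> (nat \<Rightarrow> 'a) \<Rightarrow> bool" where
  "holds_DNF \<phi> x \<longleftrightarrow> (\<exists>c\<in>set \<phi>. clause_conj x c)"

definition holds_CNF :: "'a::comm_ring_1 nf \<Rightarrow> (nat \<Rightarrow> 'a) \<Rightarrow> bool" where
  "holds_CNF \<phi> x \<longleftrightarrow> (\<forall>c\<in>set \<phi>. clause_disj x c)"

definition nf_over :: "nat \<Rightarrow> 'a nf \<Rightarrow> bool" where
  "nf_over n \<phi> \<longleftrightarrow> (\<forall>c\<in>set \<phi>. (\<forall>t\<in>set (fst c). in_Kx n t) \<and> (\<forall>u\<in>set (snd c). in_Kx n u))"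

definition num_eqs :: "'a nf \<Rightarrow> nat" where
  "num_eqs \<phi> = sum_list (map (\<lambda>c. length (fst c)) \<phi>)"

definition max_ineqs :: "'a nf \<Rightarrow> nat" where
  "max_ineqs \<phi> = Max (insert 0 (set (map (\<lambda>c. length (snd c)) \<phi>)))"

end

theory Submission
  imports Defs "HOL-Computational_Algebra.Polynomial"
begin

(*
  In characteristic 0 the field is infinite, so a polynomial in b vanishes for every b iff all
  its coefficients vanish. Read as a polynomial in b, the i-th factor
  (1 - a * prod_k u_ik) + sum_j t_ij * b^j of p is zero iff all t_ij = 0 and a * prod_k u_ik = 1,
  and such an a exists iff all u_ik are nonzero (Rabinowitsch's trick).

  For the CNF, q is the product of 1 - b * prod_h (a - h) with a Lagrange-type sum over the
  clauses. If a is not one of the d nodes, the first factor has a root b. At the node a = i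
  every summand except the i-th vanishes, and the i-th carries the factor prod_(h ~= i) (i - h),
  which is nonzero because the nodes are distinct in characteristic 0. So a root b exists iff
  prod_j t_ij * prod_k (1 - b * u_ik) has one, i.e. iff the i-th clause holds.
*)

definition pprod :: "'a::comm_ring_1 pexpr list \<Rightarrow> 'a pexpr" where
  "pprod ps = foldr PMul ps (PConst 1)"

definition psum :: "'a::comm_ring_1 pexpr list \<Rightarrow> 'a pexpr" where
  "psum ps = foldr PAdd ps (PConst 0)"

definition one_minus_var_mul :: "var \<Rightarrow> 'a::comm_ring_1 pexpr \<Rightarrow> 'a pexpr" where
  "one_minus_var_mul v p = PAdd (PConst 1) (PNeg (PMul (PVar v) p))"

text \<open>The singleton equation avoids a spurious factor v, so the v-degree is length ts - 1.\<close>

fun phorner :: "var \<Rightarrow> 'a::comm_ring_1 pexpr list \<Rightarrow> 'a pexpr" where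
  "phorner v [] = PConst 0"
| "phorner v [t] = t"
| "phorner v (t # s # ts) = PAdd t (PMul (PVar v) (phorner v (s # ts)))"

lemma peval_pprod [simp]: "peval \<rho> (pprod ps) = (\<Prod>p\<leftarrow>ps. peval \<rho> p)"
  by (induction ps) (auto simp: pprod_def)

lemma pvars_pprod [simp]: "pvars (pprod ps) = (\<Union>p\<in>set ps. pvars p)"
  by (induction ps) (auto simp: pprod_def)

lemma pdeg_pprod [simp]: "pdeg v (pprod ps) = (\<Sum>p\<leftarrow>ps. pdeg v p)"
  by (induction ps) (auto simp: pprod_def)

lemma peval_psum [simp]: "peval \<rho> (psum ps) = (\<Sum>p\<leftarrow>ps. peval \<rho> p)"
  by (induction ps) (auto simp: psum_def)

lemma pvars_psum [simp]: "pvars (psum ps) = (\<Union>p\<in>set ps. pvars p)"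
  by (induction ps) (auto simp: psum_def)

lemma pdeg_psum_le: "(\<And>p. p \<in> set ps \<Longrightarrow> pdeg v p \<le> k) \<Longrightarrow> pdeg v (psum ps) \<le> k"
  by (induction ps) (auto simp: psum_def)

lemma peval_one_minus_var_mul [simp]: "peval \<rho> (one_minus_var_mul v p) = 1 - \<rho> v * peval \<rho> p"
  by (simp add: one_minus_var_mul_def)

lemma pvars_one_minus_var_mul [simp]: "pvars (one_minus_var_mul v p) = insert v (pvars p)"
  by (simp add: one_minus_var_mul_def)

lemma pdeg_one_minus_var_mul [simp]:
  "pdeg w (one_minus_var_mul v p) = (if w = v then 1 else 0) + pdeg w p"
  by (simp add: one_minus_var_mul_def)

lemma peval_phorner: "peval \<rho> (phorner v ts) = poly (Poly (map (peval \<rho>) ts)) (\<rho> v)"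
  by (induction v ts rule: phorner.induct) auto

lemma pvars_phorner: "pvars (phorner v ts) \<subseteq> insert v (\<Union>t\<in>set ts. pvars t)"
  by (induction v ts rule: phorner.induct) auto

lemma pdeg_phorner_same:
  "(\<And>t. t \<in> set ts \<Longrightarrow> pdeg v t = 0) \<Longrightarrow> pdeg v (phorner v ts) \<le> length ts - 1"
  by (induction v ts rule: phorner.induct) auto

lemma pdeg_phorner_other:
  "w \<noteq> v \<Longrightarrow> (\<And>t. t \<in> set ts \<Longrightarrow> pdeg w t \<le> k) \<Longrightarrow> pdeg w (phorner v ts) \<le> k"
  by (induction v ts rule: phorner.induct) auto

lemma peval_cong: "(\<And>v. v \<in> pvars p \<Longrightarrow> \<rho> v = \<sigma> v) \<Longrightarrow> peval \<rho> p = peval \<sigma> p"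
  by (induction p) auto

lemma pdeg_eq_0_if_notin_pvars: "v \<notin> pvars p \<Longrightarrow> pdeg v p = 0"
  by (induction p) auto

lemma env_simps [simp]: "env a b x VA = a" "env a b x VB = b" "env a b x (VX k) = x k"
  by (simp_all add: env_def)

lemma in_Kx_peval_env: "in_Kx n t \<Longrightarrow> peval (env a b x) t = peval (env 0 0 x) t"
  unfolding in_Kx_def by (rule peval_cong) auto

lemma in_Kx_pdeg:
  assumes "in_Kx n t"
  shows "pdeg VA t = 0" "pdeg VB t = 0"
  using assms by (auto simp: in_Kx_def intro!: pdeg_eq_0_if_notin_pvars)

definition clause_over :: "nat \<Rightarrow> 'a pexpr list \<times> 'a pexpr list \<Rightarrow> bool" where
  "clause_over n c \<longleftrightarrow> (\<forall>t\<in>set (fst c) \<union> set (snd c). in_Kx n t)"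

lemma nf_over_iff_clause_over: "nf_over n \<phi> \<longleftrightarrow> (\<forall>c\<in>set \<phi>. clause_over n c)"
  by (auto simp: nf_over_def clause_over_def)

lemma ex_one_minus_mul_eq_0_iff: "(\<exists>b. 1 - b * y = 0) \<longleftrightarrow> (y::'a::field) \<noteq> 0"
proof
  assume "\<exists>b. 1 - b * y = 0"
  then show "y \<noteq> 0" by auto
next
  assume "y \<noteq> 0"
  then have "1 - inverse y * y = 0" by simp
  then show "\<exists>b. 1 - b * y = 0" ..
qed

lemma Poly_eq_0_iff_all_zero: "Poly cs = 0 \<longleftrightarrow> (\<forall>c\<in>set cs. c = 0)"
  by (induction cs) auto

lemma poly_prod_list_map: "poly (\<Prod>c\<leftarrow>cs. f c) y = (\<Prod>c\<leftarrow>cs. poly (f c) y)"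
  by (induction cs) auto

lemma poly_prod_list_vanishes_iff:
  fixes f :: "'c \<Rightarrow> 'a::{idom,ring_char_0} poly"
  shows "(\<forall>b. poly (\<Prod>c\<leftarrow>cs. f c) b = 0) \<longleftrightarrow> (\<exists>c\<in>set cs. f c = 0)"
  by (auto simp: poly_all_0_iff_0 prod_list_zero_iff)

lemma ex_all_poly_prod_vanishes_iff:
  fixes T U :: "'c \<Rightarrow> 'a::field_char_0 list"
  shows "(\<exists>a. \<forall>b. poly (\<Prod>c\<leftarrow>cs. Poly ((1 - a * prod_list (U c)) # T c)) b = 0)
     \<longleftrightarrow> (\<exists>c\<in>set cs. (\<forall>t\<in>set (T c). t = 0) \<and> (\<forall>u\<in>set (U c). u \<noteq> 0))"
proof -
  have "(\<exists>a. \<forall>b. poly (\<Prod>c\<leftarrow>cs. Poly ((1 - a * prod_list (U c)) # T c)) b = 0)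
      \<longleftrightarrow> (\<exists>c\<in>set cs. (\<exists>a. 1 - a * prod_list (U c) = 0) \<and> (\<forall>t\<in>set (T c). t = 0))"
    by (auto simp: poly_prod_list_vanishes_iff Poly_eq_0_iff_all_zero)
  also have "\<dots> \<longleftrightarrow> (\<exists>c\<in>set cs. (\<forall>t\<in>set (T c). t = 0) \<and> (\<forall>u\<in>set (U c). u \<noteq> 0))"
    unfolding ex_one_minus_mul_eq_0_iff prod_list_zero_iff by blast
  finally show ?thesis .
qed

lemma ex_prod_one_minus_mul_eq_0_iff:
  fixes ts us :: "'a::field list"
  shows "(\<exists>b. prod_list ts * (\<Prod>u\<leftarrow>us. 1 - b * u) = 0) \<longleftrightarrow> 0 \<in> set ts \<or> (\<exists>u\<in>set us. u \<noteq> 0)"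
proof -
  have "(\<exists>b. (\<Prod>u\<leftarrow>us. 1 - b * u) = 0) \<longleftrightarrow> (\<exists>u\<in>set us. \<exists>b. 1 - b * u = 0)"
    by (auto simp: prod_list_zero_iff image_iff simp del: right_minus_eq)
  then show ?thesis
    by (auto simp: ex_one_minus_mul_eq_0_iff prod_list_zero_iff simp del: right_minus_eq)
qed

lemma node_cofactor_eq_0_iff:
  assumes "j < d"
  shows "(\<Prod>h\<leftarrow>remove1 i [0..<d]. of_nat j - of_nat h :: 'a::{idom,ring_char_0}) = 0 \<longleftrightarrow> i \<noteq> j"
  using assms by (auto simp: prod_list_zero_iff)

lemma node_selector_sum_at_node:
  fixes g :: "nat \<Rightarrow> 'a::{idom,ring_char_0}"
  assumes "j < d"
  shows "(\<Sum>i\<leftarrow>[0..<d]. (\<Prod>h\<leftarrow>remove1 i [0..<d]. of_nat j - of_nat h) * g i)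
       = (\<Prod>h\<leftarrow>remove1 j [0..<d]. of_nat j - of_nat h) * g j"
proof -
  have "(\<Sum>i\<leftarrow>[0..<d]. (\<Prod>h\<leftarrow>remove1 i [0..<d]. of_nat j - of_nat h) * g i)
      = (\<Sum>i\<in>{..<d}. (\<Prod>h\<leftarrow>remove1 i [0..<d]. of_nat j - of_nat h :: 'a) * g i)"
    by (simp add: interv_sum_list_conv_sum_set_nat atLeast0LessThan)
  also have "\<dots> = (\<Prod>h\<leftarrow>remove1 j [0..<d]. of_nat j - of_nat h) * g j"
    using assms by (subst sum.remove[of _ j]) (auto simp: node_cofactor_eq_0_iff intro!: sum.neutral)
  finally show ?thesis .
qed

lemma all_ex_node_selector_iff:
  fixes g :: "nat \<Rightarrow> 'a::field_char_0 \<Rightarrow> 'a"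
  shows "(\<forall>a. \<exists>b. (1 - b * (\<Prod>h\<leftarrow>[0..<d]. a - of_nat h))
              * (\<Sum>i\<leftarrow>[0..<d]. (\<Prod>h\<leftarrow>remove1 i [0..<d]. a - of_nat h) * g i b) = 0)
     \<longleftrightarrow> (\<forall>i<d. \<exists>b. g i b = 0)" (is "(\<forall>a. \<exists>b. ?q a b = 0) \<longleftrightarrow> _")
proof
  assume q: "\<forall>a. \<exists>b. ?q a b = 0"
  show "\<forall>i<d. \<exists>b. g i b = 0"
  proof (intro allI impI)
    fix i assume "i < d"
    obtain b where "?q (of_nat i) b = 0" using q by blast
    moreover have "(\<Prod>h\<leftarrow>[0..<d]. of_nat i - of_nat h :: 'a) = 0"
      using \<open>i < d\<close> by (auto simp: prod_list_zero_iff)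
    ultimately show "\<exists>b. g i b = 0"
      using \<open>i < d\<close> by (auto simp: node_selector_sum_at_node node_cofactor_eq_0_iff)
  qed
next
  assume g: "\<forall>i<d. \<exists>b. g i b = 0"
  show "\<forall>a. \<exists>b. ?q a b = 0"
  proof
    fix a :: 'a
    show "\<exists>b. ?q a b = 0"
    proof (cases "\<exists>j<d. a = of_nat j")
      case True
      then obtain j b where "j < d" "a = of_nat j" "g j b = 0" using g by blast
      then have "?q a b = 0" by (simp add: node_selector_sum_at_node)
      then show ?thesis ..
    next
      case False
      then have "(\<Prod>h\<leftarrow>[0..<d]. a - of_nat h) \<noteq> 0" by (auto simp: prod_list_zero_iff)
      then obtain b where "1 - b * (\<Prod>h\<leftarrow>[0..<d]. a - of_nat h) = 0"
        using ex_one_minus_mul_eq_0_iff by blast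
      then have "?q a b = 0" by simp
      then show ?thesis ..
    qed
  qed
qed

definition dnf_factor :: "'a::comm_ring_1 pexpr list \<times> 'a pexpr list \<Rightarrow> 'a pexpr" where
  "dnf_factor c = phorner VB (one_minus_var_mul VA (pprod (snd c)) # fst c)"

definition dnf_poly :: "'a::comm_ring_1 nf \<Rightarrow> 'a pexpr" where
  "dnf_poly \<phi> = pprod (map dnf_factor \<phi>)"

lemma peval_dnf_factor:
  assumes "clause_over n c"
  shows "peval (env a b x) (dnf_factor c)
       = poly (Poly ((1 - a * (\<Prod>u\<leftarrow>snd c. peval (env 0 0 x) u)) # map (peval (env 0 0 x)) (fst c))) b"
proof -
  have "peval (env a b x) t = peval (env 0 0 x) t" if "t \<in> set (fst c) \<union> set (snd c)" for t
    using assms that in_Kx_peval_env unfolding clause_over_def by blast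
  then show ?thesis by (simp add: dnf_factor_def peval_phorner cong: map_cong)
qed

lemma peval_dnf_poly:
  assumes "nf_over n \<phi>"
  shows "peval (env a b x) (dnf_poly \<phi>)
       = poly (\<Prod>c\<leftarrow>\<phi>. Poly ((1 - a * (\<Prod>u\<leftarrow>snd c. peval (env 0 0 x) u)) # map (peval (env 0 0 x)) (fst c))) b"
  using assms unfolding dnf_poly_def poly_prod_list_map peval_pprod map_map o_def
  by (intro arg_cong[where f = prod_list] map_cong refl peval_dnf_factor) (auto simp: nf_over_iff_clause_over)

lemma dnf_factor_in_Kabx:
  assumes "clause_over n c"
  shows "pvars (dnf_factor c) \<subseteq> {VA, VB} \<union> VX ` {..<n}"
proof -
  have "pvars t \<subseteq> VX ` {..<n}" if "t \<in> set (fst c) \<union> set (snd c)" for t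
    using assms that by (auto simp: clause_over_def in_Kx_def)
  then show ?thesis
    using pvars_phorner[of VB "one_minus_var_mul VA (pprod (snd c)) # fst c"]
    by (fastforce simp: dnf_factor_def)
qed

lemma pdeg_dnf_factor:
  assumes "clause_over n c"
  shows "pdeg VA (dnf_factor c) \<le> 1" "pdeg VB (dnf_factor c) \<le> length (fst c)"
proof -
  have deg0: "pdeg VA t = 0" "pdeg VB t = 0" if "t \<in> set (fst c) \<union> set (snd c)" for t
    using assms that in_Kx_pdeg unfolding clause_over_def by blast+
  then show "pdeg VA (dnf_factor c) \<le> 1"
    unfolding dnf_factor_def by (intro pdeg_phorner_other) (auto simp: sum_list_eq_0_iff)
  show "pdeg VB (dnf_factor c) \<le> length (fst c)"
    unfolding dnf_factor_def using deg0
    by (intro order_trans[OF pdeg_phorner_same]) (auto simp: sum_list_eq_0_iff)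
qed

lemma dnf_poly_in_Kabx: "nf_over n \<phi> \<Longrightarrow> in_Kabx n (dnf_poly \<phi>)"
  using dnf_factor_in_Kabx by (fastforce simp: in_Kabx_def dnf_poly_def nf_over_iff_clause_over)

lemma pdeg_dnf_poly:
  assumes "nf_over n \<phi>"
  shows "pdeg VA (dnf_poly \<phi>) \<le> length \<phi>" "pdeg VB (dnf_poly \<phi>) \<le> num_eqs \<phi>"
proof -
  have deg: "pdeg VA (dnf_factor c) \<le> 1" "pdeg VB (dnf_factor c) \<le> length (fst c)"
    if "c \<in> set \<phi>" for c
    using pdeg_dnf_factor[of n c] assms that by (simp_all add: nf_over_iff_clause_over)
  have "(\<Sum>c\<leftarrow>\<phi>. pdeg VA (dnf_factor c)) \<le> (\<Sum>c\<leftarrow>\<phi>. 1)"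
    using deg by (intro sum_list_mono) auto
  then show "pdeg VA (dnf_poly \<phi>) \<le> length \<phi>"
    by (simp add: dnf_poly_def o_def sum_list_triv)
  have "(\<Sum>c\<leftarrow>\<phi>. pdeg VB (dnf_factor c)) \<le> (\<Sum>c\<leftarrow>\<phi>. length (fst c))"
    using deg by (intro sum_list_mono) auto
  then show "pdeg VB (dnf_poly \<phi>) \<le> num_eqs \<phi>"
    by (simp add: dnf_poly_def num_eqs_def o_def)
qed

theorem holds_DNF_iff_dnf_poly:
  fixes \<phi> :: "'a::field_char_0 nf"
  assumes "nf_over n \<phi>"
  shows "holds_DNF \<phi> x \<longleftrightarrow> (\<exists>a. \<forall>b. peval (env a b x) (dnf_poly \<phi>) = 0)"
  unfolding peval_dnf_poly[OF assms] ex_all_poly_prod_vanishes_iff holds_DNF_def clause_conj_def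
  by simp

text \<open>The nodes are 0, \<dots>, d - 1 rather than the paper's 1, \<dots>, d.\<close>

definition node_factor :: "nat \<Rightarrow> 'a::comm_ring_1 pexpr" where
  "node_factor h = PAdd (PVar VA) (PConst (- of_nat h))"

definition cnf_term :: "nat \<Rightarrow> nat \<Rightarrow> 'a::comm_ring_1 pexpr list \<times> 'a pexpr list \<Rightarrow> 'a pexpr" where
  "cnf_term d i c = PMul (pprod (map node_factor (remove1 i [0..<d])))
     (PMul (pprod (fst c)) (pprod (map (one_minus_var_mul VB) (snd c))))"

definition cnf_poly :: "'a::comm_ring_1 nf \<Rightarrow> 'a pexpr" where
  "cnf_poly \<psi> = PMul (one_minus_var_mul VB (pprod (map node_factor [0..<length \<psi>])))
     (psum (map (\<lambda>i. cnf_term (length \<psi>) i (\<psi> ! i)) [0..<length \<psi>]))"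

lemma peval_node_factor [simp]: "peval \<rho> (node_factor h) = \<rho> VA - of_nat h"
  by (simp add: node_factor_def)

lemma pvars_node_factor [simp]: "pvars (node_factor h) = {VA}"
  by (simp add: node_factor_def)

lemma pdeg_node_factor [simp]: "pdeg v (node_factor h) = (if v = VA then 1 else 0)"
  by (simp add: node_factor_def)

lemma peval_cnf_term:
  assumes "clause_over n c"
  shows "peval (env a b x) (cnf_term d i c) = (\<Prod>h\<leftarrow>remove1 i [0..<d]. a - of_nat h)
       * ((\<Prod>t\<leftarrow>fst c. peval (env 0 0 x) t) * (\<Prod>u\<leftarrow>snd c. 1 - b * peval (env 0 0 x) u))"
proof -
  have "peval (env a b x) t = peval (env 0 0 x) t" if "t \<in> set (fst c) \<union> set (snd c)" for t
    using assms that in_Kx_peval_env unfolding clause_over_def by blast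
  then show ?thesis by (simp add: cnf_term_def o_def cong: map_cong)
qed

lemma peval_cnf_poly:
  assumes "nf_over n \<psi>"
  shows "peval (env a b x) (cnf_poly \<psi>) = (1 - b * (\<Prod>h\<leftarrow>[0..<length \<psi>]. a - of_nat h))
       * (\<Sum>i\<leftarrow>[0..<length \<psi>]. (\<Prod>h\<leftarrow>remove1 i [0..<length \<psi>]. a - of_nat h)
            * ((\<Prod>t\<leftarrow>fst (\<psi> ! i). peval (env 0 0 x) t)
               * (\<Prod>u\<leftarrow>snd (\<psi> ! i). 1 - b * peval (env 0 0 x) u)))"
proof -
  have "clause_over n (\<psi> ! i)" if "i < length \<psi>" for i
    using assms that by (simp add: nf_over_iff_clause_over)
  then show ?thesis
    unfolding cnf_poly_def peval.simps peval_psum peval_one_minus_var_mul peval_pprod map_map o_def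
    by (auto intro!: arg_cong2[where f = "(*)"] arg_cong[where f = sum_list] map_cong peval_cnf_term)
qed

lemma cnf_poly_in_Kabx:
  assumes "nf_over n \<psi>"
  shows "in_Kabx n (cnf_poly \<psi>)"
proof -
  have "pvars t \<subseteq> {VA, VB} \<union> VX ` {..<n}"
    if "i < length \<psi>" "t \<in> set (fst (\<psi> ! i)) \<union> set (snd (\<psi> ! i))" for i t
    using assms that nth_mem[OF that(1)] unfolding nf_over_def in_Kx_def by blast
  then show ?thesis
    unfolding in_Kabx_def cnf_poly_def cnf_term_def by (simp add: UN_subset_iff)
qed

lemma pdeg_cnf_term:
  assumes "clause_over n c" "i < d"
  shows "pdeg VA (cnf_term d i c) = d - 1" "pdeg VB (cnf_term d i c) = length (snd c)"
proof -
  have "pdeg VA t = 0" "pdeg VB t = 0" if "t \<in> set (fst c) \<union> set (snd c)" for t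
    using assms that in_Kx_pdeg unfolding clause_over_def by blast+
  then show "pdeg VA (cnf_term d i c) = d - 1" "pdeg VB (cnf_term d i c) = length (snd c)"
    using assms(2) by (simp_all add: cnf_term_def o_def sum_list_triv length_remove1 cong: map_cong)
qed

lemma pdeg_cnf_poly:
  assumes "nf_over n \<psi>"
  shows "pdeg VA (cnf_poly \<psi>) \<le> 2 * length \<psi> - 1" "pdeg VB (cnf_poly \<psi>) \<le> max_ineqs \<psi> + 1"
proof -
  let ?d = "length \<psi>"
  have deg: "pdeg VA (cnf_term ?d i (\<psi> ! i)) = ?d - 1" "pdeg VB (cnf_term ?d i (\<psi> ! i)) \<le> max_ineqs \<psi>"
    if "i < ?d" for i
  proof -
    have "clause_over n (\<psi> ! i)" using assms that by (simp add: nf_over_iff_clause_over)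
    then show "pdeg VA (cnf_term ?d i (\<psi> ! i)) = ?d - 1"
      "pdeg VB (cnf_term ?d i (\<psi> ! i)) \<le> max_ineqs \<psi>"
      using that by (auto simp: pdeg_cnf_term max_ineqs_def intro!: Max_ge)
  qed
  have "pdeg VA (psum (map (\<lambda>i. cnf_term ?d i (\<psi> ! i)) [0..<?d])) \<le> ?d - 1"
    using deg by (intro pdeg_psum_le) auto
  then show "pdeg VA (cnf_poly \<psi>) \<le> 2 * ?d - 1"
    by (simp add: cnf_poly_def o_def sum_list_triv)
  have "pdeg VB (psum (map (\<lambda>i. cnf_term ?d i (\<psi> ! i)) [0..<?d])) \<le> max_ineqs \<psi>"
    using deg by (intro pdeg_psum_le) auto
  then show "pdeg VB (cnf_poly \<psi>) \<le> max_ineqs \<psi> + 1"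
    by (simp add: cnf_poly_def o_def sum_list_eq_0_iff)
qed

lemma clause_disj_iff_ex_prod_vanishes:
  "clause_disj x c \<longleftrightarrow> (\<exists>b. (\<Prod>t\<leftarrow>fst c. peval (env 0 0 x) t)
       * (\<Prod>u\<leftarrow>snd c. 1 - b * peval (env 0 0 x) u) = (0::'a::field))"
  using ex_prod_one_minus_mul_eq_0_iff[of "map (peval (env 0 0 x)) (fst c)" "map (peval (env 0 0 x)) (snd c)"]
  by (auto simp: clause_disj_def o_def image_iff eq_commute[of 0])

theorem holds_CNF_iff_cnf_poly:
  fixes \<psi> :: "'a::field_char_0 nf"
  assumes "nf_over n \<psi>"
  shows "holds_CNF \<psi> x \<longleftrightarrow> (\<forall>a. \<exists>b. peval (env a b x) (cnf_poly \<psi>) = 0)"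
  unfolding peval_cnf_poly[OF assms] all_ex_node_selector_iff holds_CNF_def all_set_conv_all_nth
    clause_disj_iff_ex_prod_vanishes ..

theorem mainTheorem4:
  fixes n :: nat and \<phi> \<psi> :: "'a::field_char_0 nf"
  assumes "nf_over n \<phi>" and "nf_over n \<psi>"
  shows "(\<exists>p. in_Kabx n p \<and> pdeg VA p \<le> length \<phi> \<and> pdeg VB p \<le> num_eqs \<phi> \<and>
            (\<forall>x::nat \<Rightarrow> 'a. holds_DNF \<phi> x \<longleftrightarrow> (\<exists>a. \<forall>b. peval (env a b x) p = 0)))
       \<and> (\<exists>q. in_Kabx n q \<and> pdeg VA q \<le> 2 * length \<psi> - 1 \<and> pdeg VB q \<le> max_ineqs \<psi> + 1 \<and>
            (\<forall>x::nat \<Rightarrow> 'a. holds_CNF \<psi> x \<longleftrightarrow> (\<forall>a. \<exists>b. peval (env a b x) q = 0)))"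
  using dnf_poly_in_Kabx[OF assms(1)] pdeg_dnf_poly[OF assms(1)] holds_DNF_iff_dnf_poly[OF assms(1)]
    cnf_poly_in_Kabx[OF assms(2)] pdeg_cnf_poly[OF assms(2)] holds_CNF_iff_cnf_poly[OF assms(2)]
  by blast

end
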